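(* Any quantum oracle algorithm that solves $\mathsf{DL\text{-}LCS\text{-}RLE}$ with probability at least $2/3$ requires $\Omega(n)$ queries, where $n$ is the encoded length of the inputs.
   Context: A string $\tilde s$ has run-length encoding (RLE) $s=s[1]\cdots s[m]$, its sequence of maximal runs of identical characters, each run having character $C(s[i])$ and length $R(s[i])$; $|s|=m$ is the encoded length. The problem $\mathsf{DL\text{-}LCS\text{-}RLE}$: given quantum oracle access to two RLE strings $A$ and $B$ only through the unitaries $|i\rangle|c\rangle|r\rangle\mapsto|i\rangle|c\oplus C(S[i])\rangle|r\oplus R(S[i])\rangle$ for $S\in\{A,B\}$ (no prefix-sum oracle), compute $|\tilde s|$ where $\tilde s$ is a longest common substring of the decoded strings $\tilde A$ and $\tilde B$. *)

theory Defs
  imports Complex_Main "HOL-Library.Sublist"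
begin

text \<open>An RLE string is a list of runs (character, run length); characters are naturals.\<close>
type_synonym rle = "(nat \<times> nat) list"

definition valid_rle :: "rle \<Rightarrow> bool" where
  "valid_rle S \<longleftrightarrow> (\<forall>k<length S. 1 \<le> snd (S ! k))
     \<and> (\<forall>k. Suc k < length S \<longrightarrow> fst (S ! k) \<noteq> fst (S ! Suc k))"

definition decode :: "rle \<Rightarrow> nat list" where
  "decode S = concat (map (\<lambda>(c, r). replicate r c) S)"

definition lcs_len :: "nat list \<Rightarrow> nat list \<Rightarrow> nat" where
  "lcs_len X Y = Max {length z | z. sublist z X \<and> sublist z Y}"

text \<open>Computational basis states: (index i, character register c, run-length register r,
  workspace w).  Registers c and r hold kc resp. kr bits.\<close>
type_synonym qbasis = "nat \<times> nat \<times> nat \<times> nat"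
type_synonym qstate = "qbasis \<Rightarrow> complex"
type_synonym qmat = "qbasis \<Rightarrow> qbasis \<Rightarrow> complex"

definition qbasis_set :: "nat \<Rightarrow> nat \<Rightarrow> nat \<Rightarrow> nat \<Rightarrow> qbasis set" where
  "qbasis_set n kc kr W = {0..<n} \<times> {0..<2^kc} \<times> {0..<2^kr} \<times> {0..<W}"

definition unitary_on :: "qbasis set \<Rightarrow> qmat \<Rightarrow> bool" where
  "unitary_on Bs U \<longleftrightarrow> (\<forall>x\<in>Bs. \<forall>y\<in>Bs.
      (\<Sum>z\<in>Bs. cnj (U z x) * U z y) = (if x = y then 1 else 0))"

definition apply_mat :: "qbasis set \<Rightarrow> qmat \<Rightarrow> qstate \<Rightarrow> qstate" where
  "apply_mat Bs U \<psi> = (\<lambda>x. \<Sum>y\<in>Bs. U x y * \<psi> y)"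

definition query_op :: "rle \<Rightarrow> qstate \<Rightarrow> qstate" where
  "query_op S \<psi> = (\<lambda>(i, c, r, w). \<psi> (i, Bit_Operations.xor c (fst (S ! i)), Bit_Operations.xor r (snd (S ! i)), w))"

fun qrun :: "qbasis set \<Rightarrow> (nat \<Rightarrow> qmat) \<Rightarrow> (nat \<Rightarrow> bool) \<Rightarrow> rle \<Rightarrow> rle \<Rightarrow> nat \<Rightarrow> qstate" where
  "qrun Bs U sched A B 0 = apply_mat Bs (U 0) (\<lambda>x. if x = (0, 0, 0, 0) then 1 else 0)"
| "qrun Bs U sched A B (Suc t) =
     apply_mat Bs (U (Suc t)) (query_op (if sched t then A else B) (qrun Bs U sched A B t))"

definition succ_prob :: "qbasis set \<Rightarrow> (nat \<Rightarrow> qmat) \<Rightarrow> (nat \<Rightarrow> bool) \<Rightarrow> (qbasis \<Rightarrow> nat)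
    \<Rightarrow> nat \<Rightarrow> rle \<Rightarrow> rle \<Rightarrow> nat \<Rightarrow> real" where
  "succ_prob Bs U sched out T A B ans =
     (\<Sum>x\<in>{x\<in>Bs. out x = ans}. (cmod (qrun Bs U sched A B T x))\<^sup>2)"

end

theory Submission
  imports Defs "HOL-Library.Disjoint_Sets"
begin

(* On the inputs A = B = hard_instance n S, run i has length 2 or 1 according to whether i \<in> S,
   so the answer is n + |S| and a successful algorithm outputs a number of the parity of n + |S|
   with probability at least 2/3.  A query reads one membership bit of S, hence after T queries
   every amplitude is a polynomial of degree at most T in the indicator variables of S, and the
   probability of an even output has degree at most 2T.  A polynomial of degree below n is
   uncorrelated with the parity of |S| over the subsets of {0..<n}, while a function lying on
   the correct side of 1/2 everywhere is not; hence 2T \<ge> n. *)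

section \<open>Low-degree set functions and parity\<close>

definition depends_only_on :: "nat set \<Rightarrow> (nat set \<Rightarrow> 'a) \<Rightarrow> bool" where
  "depends_only_on J f \<longleftrightarrow> (\<forall>S S'. S \<inter> J = S' \<inter> J \<longrightarrow> f S = f S')"

(* Sums of d-juntas: the functions that are polynomials of degree at most d
   in the indicator variables of S. *)
inductive low_degree :: "nat \<Rightarrow> (nat set \<Rightarrow> 'a::plus) \<Rightarrow> bool" for d where
  junta: "finite J \<Longrightarrow> card J \<le> d \<Longrightarrow> depends_only_on J f \<Longrightarrow> low_degree d f"
| add: "low_degree d f \<Longrightarrow> low_degree d g \<Longrightarrow> low_degree d (\<lambda>S. f S + g S)"

lemma depends_only_on_Un:
  assumes "depends_only_on J f" "depends_only_on J' g"
  shows "depends_only_on (J \<union> J') (\<lambda>S. h (f S) (g S))"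
  unfolding depends_only_on_def
proof (intro allI impI)
  fix S S' assume "S \<inter> (J \<union> J') = S' \<inter> (J \<union> J')"
  then have "S \<inter> J = S' \<inter> J" "S \<inter> J' = S' \<inter> J'" by blast+
  then show "h (f S) (g S) = h (f S') (g S')"
    using assms unfolding depends_only_on_def by metis
qed

lemma depends_only_on_singleton:
  assumes "depends_only_on {i} f"
  shows "f S = (if i \<in> S then f {i} else f {})"
  using assms[unfolded depends_only_on_def, rule_format, of S "{i}"]
    assms[unfolded depends_only_on_def, rule_format, of S "{}"]
  by auto

lemma low_degree_const: "low_degree d (\<lambda>S. c)"
  by (rule low_degree.junta[of "{}"]) (auto simp: depends_only_on_def)

lemma low_degree_indicator: "low_degree 1 (\<lambda>S. if i \<in> S then a else b)"
  by (rule low_degree.junta[of "{i}"]) (auto simp: depends_only_on_def)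

lemma low_degree_sum:
  fixes F :: "'b \<Rightarrow> nat set \<Rightarrow> 'a::comm_monoid_add"
  assumes "finite Y" "\<And>y. y \<in> Y \<Longrightarrow> low_degree d (F y)"
  shows "low_degree d (\<lambda>S. \<Sum>y\<in>Y. F y S)"
  using assms
proof (induction Y rule: finite_induct)
  case empty
  show ?case using low_degree_const[of d 0] by simp
next
  case (insert y Y)
  then show ?case by (simp add: low_degree.add)
qed

lemma low_degree_additive:
  assumes "\<And>x y. h (x + y) = h x + h y"
  shows "low_degree d f \<Longrightarrow> low_degree d (\<lambda>S. h (f S))"
proof (induction rule: low_degree.induct)
  case (junta J f)
  have "depends_only_on J (\<lambda>S. h (f S))"
    using \<open>depends_only_on J f\<close> unfolding depends_only_on_def by metis
  with junta.hyps show ?case by (intro low_degree.junta)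
next
  case (add f g)
  then have "low_degree d (\<lambda>S. h (f S) + h (g S))"
    by (intro low_degree.add)
  then show ?case by (simp only: assms)
qed

lemma low_degree_diff:
  fixes f g :: "nat set \<Rightarrow> 'a::ab_group_add"
  assumes "low_degree d f" "low_degree d g"
  shows "low_degree d (\<lambda>S. f S - g S)"
  using low_degree.add[OF assms(1) low_degree_additive[of uminus, OF _ assms(2)]] by simp

lemma low_degree_mult:
  fixes f g :: "nat set \<Rightarrow> 'a::semiring"
  assumes "low_degree a f" "low_degree b g"
  shows "low_degree (a + b) (\<lambda>S. f S * g S)"
  using assms
proof (induction arbitrary: g rule: low_degree.induct)
  case (junta J f)
  from junta.prems show ?case
  proof (induction rule: low_degree.induct)
    case (junta J' g)
    show ?case
    proof (rule low_degree.junta[of "J \<union> J'"])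
      show "finite (J \<union> J')"
        using \<open>finite J\<close> \<open>finite J'\<close> by simp
      show "card (J \<union> J') \<le> a + b"
        using card_Un_le[of J J'] \<open>card J \<le> a\<close> \<open>card J' \<le> b\<close> by linarith
      show "depends_only_on (J \<union> J') (\<lambda>S. f S * g S)"
        using depends_only_on_Un[OF \<open>depends_only_on J f\<close> \<open>depends_only_on J' g\<close>, of "(*)"] .
    qed
  next
    case (add g1 g2)
    then have "low_degree (a + b) (\<lambda>S. f S * g1 S + f S * g2 S)"
      by (intro low_degree.add)
    then show ?case by (simp add: distrib_left)
  qed
next
  case (add f1 f2)
  then have "low_degree (a + b) (\<lambda>S. f1 S * g S + f2 S * g S)"
    by (intro low_degree.add) auto
  then show ?case by (simp add: distrib_right)
qed

lemma sum_parity_eq_0_if_insensitive: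
  fixes g :: "nat set \<Rightarrow> 'a::comm_ring_1"
  assumes "i < n" "\<And>S. g (insert i S) = g (S - {i})"
  shows "(\<Sum>S\<in>Pow {..<n}. (-1) ^ card S * g S) = 0"
proof (rule sum_involution_eq_0[where h = "\<lambda>S. if i \<in> S then S - {i} else insert i S"])
  have flip: "(-1) ^ card (insert i S) * g (insert i S) + (-1) ^ card S * g S = 0"
    if "finite S" "i \<notin> S" for S
    using that assms(2)[of S] by simp
  fix S assume "S \<in> Pow {..<n}"
  then have "finite S" by (auto intro: finite_subset)
  then show "(-1) ^ card (if i \<in> S then S - {i} else insert i S)
      * g (if i \<in> S then S - {i} else insert i S) + (-1) ^ card S * g S = 0"
    using flip[of S] flip[of "S - {i}"] by (auto simp: insert_absorb add.commute)
qed (use assms(1) in auto)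

lemma sum_parity_mult_low_degree_eq_0:
  fixes f :: "nat set \<Rightarrow> 'a::comm_ring_1"
  shows "low_degree d f \<Longrightarrow> d < n \<Longrightarrow> (\<Sum>S\<in>Pow {..<n}. (-1) ^ card S * f S) = 0"
proof (induction rule: low_degree.induct)
  case (junta J f)
  have "\<not> {..<n} \<subseteq> J"
    using card_mono[OF \<open>finite J\<close>, of "{..<n}"] \<open>card J \<le> d\<close> \<open>d < n\<close> by auto
  then obtain i where "i < n" "i \<notin> J" by auto
  show ?case
  proof (rule sum_parity_eq_0_if_insensitive[OF \<open>i < n\<close>])
    fix S
    have "insert i S \<inter> J = (S - {i}) \<inter> J"
      using \<open>i \<notin> J\<close> by auto
    then show "f (insert i S) = f (S - {i})"
      using \<open>depends_only_on J f\<close> unfolding depends_only_on_def by blast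
  qed
next
  case (add f g)
  then show ?case by (simp add: distrib_left sum.distrib)
qed

lemma degree_ge_if_sign_of_parity:
  fixes f :: "nat set \<Rightarrow> 'a::linordered_idom"
  assumes "low_degree d f" "\<And>S. S \<subseteq> {..<n} \<Longrightarrow> 0 < (-1) ^ card S * f S"
  shows "n \<le> d"
proof (rule ccontr)
  assume "\<not> n \<le> d"
  then have "(\<Sum>S\<in>Pow {..<n}. (-1) ^ card S * f S) = 0"
    using sum_parity_mult_low_degree_eq_0[OF assms(1)] by simp
  moreover have "0 < (\<Sum>S\<in>Pow {..<n}. (-1) ^ card S * f S)"
    using assms(2) by (intro sum_pos) auto
  ultimately show False by simp
qed

section \<open>Hard instances\<close>

lemma length_decode: "length (decode A) = (\<Sum>(c, r)\<leftarrow>A. r)"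
  by (induction A) (auto simp: decode_def)

lemma lcs_len_self: "lcs_len X X = length X"
  unfolding lcs_len_def
proof (rule Max_eqI)
  show "finite {length z |z. sublist z X \<and> sublist z X}"
    by (rule finite_subset[of _ "{..length X}"]) (auto dest: sublist_length_le)
qed (auto dest: sublist_length_le)

definition hard_instance :: "nat \<Rightarrow> nat set \<Rightarrow> rle" where
  "hard_instance n S = map (\<lambda>i. (i mod 2, if i \<in> S then 2 else 1)) [0..<n]"

lemma length_hard_instance [simp]: "length (hard_instance n S) = n"
  by (simp add: hard_instance_def)

lemma nth_hard_instance [simp]:
  "i < n \<Longrightarrow> hard_instance n S ! i = (i mod 2, if i \<in> S then 2 else 1)"
  by (simp add: hard_instance_def)

lemma valid_rle_hard_instance: "valid_rle (hard_instance n S)"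
  unfolding valid_rle_def by auto presburger

lemma depends_only_on_nth_hard_instance:
  "i < n \<Longrightarrow> depends_only_on {i} (\<lambda>S. hard_instance n S ! i)"
  by (auto simp: depends_only_on_def)

lemma length_decode_hard_instance:
  "length (decode (hard_instance n S)) = n + card (S \<inter> {..<n})"
proof (induction n)
  case (Suc n)
  have "S \<inter> {..<Suc n} = (if n \<in> S then insert n (S \<inter> {..<n}) else S \<inter> {..<n})"
    by (auto simp: lessThan_Suc)
  with Suc show ?case by (simp add: hard_instance_def length_decode)
qed (simp add: hard_instance_def decode_def)

lemma hard_instance_fits:
  assumes "1 < (2::nat) ^ kc" "2 < (2::nat) ^ kr" "p \<in> set (hard_instance n S)"
  shows "fst p < 2 ^ kc \<and> snd p < 2 ^ kr"
proof -
  have "fst p < 2 \<and> snd p \<le> 2"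
    using assms(3) by (auto simp: hard_instance_def)
  with assms(1,2) show ?thesis by linarith
qed

section \<open>Quantum query algorithms\<close>

lemma finite_qbasis_set [simp]: "finite (qbasis_set n kc kr W)"
  by (simp add: qbasis_set_def)

definition sqnorm :: "qbasis set \<Rightarrow> qstate \<Rightarrow> real" where
  "sqnorm X \<psi> = (\<Sum>x\<in>X. (cmod (\<psi> x))\<^sup>2)"

lemma of_real_sqnorm: "complex_of_real (sqnorm X \<psi>) = (\<Sum>x\<in>X. \<psi> x * cnj (\<psi> x))"
  unfolding sqnorm_def of_real_sum by (intro sum.cong refl complex_norm_square)

lemma sqnorm_mono: "finite X \<Longrightarrow> Y \<subseteq> X \<Longrightarrow> sqnorm Y \<psi> \<le> sqnorm X \<psi>"
  unfolding sqnorm_def by (rule sum_mono2) auto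

lemma sqnorm_partition:
  "finite X \<Longrightarrow> sqnorm X \<psi> = sqnorm {x\<in>X. P x} \<psi> + sqnorm {x\<in>X. \<not> P x} \<psi>"
  unfolding sqnorm_def by (subst sum.union_disjoint[symmetric]) (auto intro: sum.cong)

lemma sqnorm_apply_mat:
  assumes "finite X" "unitary_on X U"
  shows "sqnorm X (apply_mat X U \<psi>) = sqnorm X \<psi>"
proof -
  have "complex_of_real (sqnorm X (apply_mat X U \<psi>))
      = (\<Sum>x\<in>X. \<Sum>y\<in>X. \<Sum>z\<in>X. U x y * \<psi> y * cnj (U x z * \<psi> z))"
    by (simp only: of_real_sqnorm apply_mat_def cnj_sum sum_product)
  also have "\<dots> = (\<Sum>y\<in>X. \<Sum>z\<in>X. \<Sum>x\<in>X. U x y * \<psi> y * cnj (U x z * \<psi> z))"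
    by (subst sum.swap) (rule sum.cong[OF refl], rule sum.swap)
  also have "\<dots> = (\<Sum>y\<in>X. \<Sum>z\<in>X. \<psi> y * cnj (\<psi> z) * (\<Sum>x\<in>X. cnj (U x z) * U x y))"
    by (simp add: sum_distrib_left mult_ac)
  also have "\<dots> = (\<Sum>y\<in>X. \<Sum>z\<in>X. if z = y then \<psi> y * cnj (\<psi> z) else 0)"
    using assms(2) unfolding unitary_on_def by (intro sum.cong refl) simp
  also have "\<dots> = complex_of_real (sqnorm X \<psi>)"
    using assms(1) by (simp add: of_real_sqnorm)
  finally show ?thesis by (simp only: of_real_eq_iff)
qed

lemma xor_less_power2: "(a::nat) < 2 ^ k \<Longrightarrow> b < 2 ^ k \<Longrightarrow> Bit_Operations.xor a b < 2 ^ k"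
  by (metis take_bit_nat_eq_self_iff take_bit_xor)

lemma sqnorm_query_op:
  assumes "\<And>i. i < n \<Longrightarrow> fst (P ! i) < 2 ^ kc \<and> snd (P ! i) < 2 ^ kr"
  shows "sqnorm (qbasis_set n kc kr W) (query_op P \<psi>) = sqnorm (qbasis_set n kc kr W) \<psi>"
proof -
  define flip :: "qbasis \<Rightarrow> qbasis" where "flip = (\<lambda>(i, c, r, w).
    (i, Bit_Operations.xor c (fst (P ! i)), Bit_Operations.xor r (snd (P ! i)), w))"
  have "flip (flip x) = x" for x
    by (cases x) (simp add: flip_def xor.assoc)
  moreover have "flip x \<in> qbasis_set n kc kr W" if "x \<in> qbasis_set n kc kr W" for x
    using that assms by (cases x) (auto simp: flip_def qbasis_set_def intro!: xor_less_power2)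
  moreover have "query_op P \<psi> x = \<psi> (flip x)" for x
    by (cases x) (simp add: flip_def query_op_def)
  ultimately show ?thesis
    unfolding sqnorm_def by (intro sum.reindex_bij_witness[where i = flip and j = flip]) auto
qed

lemma sqnorm_qrun:
  assumes "0 < n" "0 < W" "\<forall>t\<le>T. unitary_on (qbasis_set n kc kr W) (U t)"
    and "\<And>i. i < n \<Longrightarrow> fst (A ! i) < 2 ^ kc \<and> snd (A ! i) < 2 ^ kr"
    and "\<And>i. i < n \<Longrightarrow> fst (B ! i) < 2 ^ kc \<and> snd (B ! i) < 2 ^ kr"
    and "t \<le> T"
  shows "sqnorm (qbasis_set n kc kr W) (qrun (qbasis_set n kc kr W) U sched A B t) = 1"
  using \<open>t \<le> T\<close>
proof (induction t)
  case 0
  have "sqnorm (qbasis_set n kc kr W) (\<lambda>x. if x = (0, 0, 0, 0) then 1 else 0)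
      = (\<Sum>x\<in>qbasis_set n kc kr W. if x = (0, 0, 0, 0) then 1 else 0)"
    unfolding sqnorm_def by (intro sum.cong) auto
  also have "\<dots> = 1"
    using assms(1,2) by (simp add: qbasis_set_def)
  finally show ?case using assms(3) by (simp add: sqnorm_apply_mat)
next
  case (Suc t)
  then show ?case using assms(3-5) by (simp add: sqnorm_apply_mat sqnorm_query_op)
qed

lemma parity_bias_of_success:
  assumes "finite X" "sqnorm X \<psi> = 1" "2/3 \<le> sqnorm {x\<in>X. out x = a} \<psi>"
  shows "1/6 \<le> (-1) ^ a * (sqnorm {x\<in>X. even (out x)} \<psi> - 1/2)"
proof (cases "even a")
  case True
  then have "sqnorm {x\<in>X. out x = a} \<psi> \<le> sqnorm {x\<in>X. even (out x)} \<psi>"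
    using assms(1) by (intro sqnorm_mono) auto
  with True assms(3) show ?thesis by simp
next
  case False
  then have "sqnorm {x\<in>X. out x = a} \<psi> \<le> sqnorm {x\<in>X. \<not> even (out x)} \<psi>"
    using assms(1) by (intro sqnorm_mono) auto
  with False assms sqnorm_partition[OF assms(1), of \<psi> "\<lambda>x. even (out x)"] show ?thesis
    by simp
qed

lemma low_degree_query_op:
  assumes "depends_only_on {i} (\<lambda>S. P S ! i)" "\<And>z. low_degree d (\<lambda>S. \<psi> S z)"
  shows "low_degree (Suc d) (\<lambda>S. query_op (P S) (\<psi> S) (i, c, r, w))"
proof -
  define flip :: "nat \<times> nat \<Rightarrow> qbasis"
    where "flip p = (i, Bit_Operations.xor c (fst p), Bit_Operations.xor r (snd p), w)" for p
  have "(\<lambda>S. query_op (P S) (\<psi> S) (i, c, r, w))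
      = (\<lambda>S. (if i \<in> S then 1 else 0) * \<psi> S (flip (P {i} ! i))
          + (if i \<in> S then 0 else 1) * \<psi> S (flip (P {} ! i)))"
  proof
    fix S
    have "P S ! i = (if i \<in> S then P {i} ! i else P {} ! i)"
      by (rule depends_only_on_singleton[OF assms(1)])
    then show "query_op (P S) (\<psi> S) (i, c, r, w) = (if i \<in> S then 1 else 0) * \<psi> S (flip (P {i} ! i))
          + (if i \<in> S then 0 else 1) * \<psi> S (flip (P {} ! i))"
      by (cases "i \<in> S") (simp_all add: query_op_def flip_def)
  qed
  moreover have "low_degree (1 + d) (\<lambda>S. (if i \<in> S then 1 else 0) * \<psi> S (flip (P {i} ! i))
        + (if i \<in> S then 0 else 1) * \<psi> S (flip (P {} ! i)))"
    by (intro low_degree.add low_degree_mult low_degree_indicator assms(2))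
  ultimately show ?thesis by simp
qed

lemma low_degree_qrun:
  assumes "\<And>i. i < n \<Longrightarrow> depends_only_on {i} (\<lambda>S. A S ! i)"
    and "\<And>i. i < n \<Longrightarrow> depends_only_on {i} (\<lambda>S. B S ! i)"
  shows "low_degree t (\<lambda>S. qrun (qbasis_set n kc kr W) U sched (A S) (B S) t x)"
proof (induction t arbitrary: x)
  case 0
  show ?case by (simp add: low_degree_const)
next
  case (Suc t)
  let ?query = "\<lambda>S. query_op (if sched t then A S else B S)
    (qrun (qbasis_set n kc kr W) U sched (A S) (B S) t)"
  have "low_degree (Suc t) (\<lambda>S. ?query S y)" if "y \<in> qbasis_set n kc kr W" for y
  proof -
    obtain i c r w where y: "y = (i, c, r, w)"
      by (cases y)
    with that have "i < n"
      by (simp add: qbasis_set_def)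
    then have "depends_only_on {i} (\<lambda>S. (if sched t then A S else B S) ! i)"
      using assms by (cases "sched t") simp_all
    then show ?thesis
      unfolding y by (rule low_degree_query_op) (rule Suc.IH)
  qed
  then have "low_degree (0 + Suc t) (\<lambda>S. \<Sum>y\<in>qbasis_set n kc kr W. U (Suc t) x y * ?query S y)"
    by (intro low_degree_sum low_degree_mult low_degree_const) auto
  then show ?case
    by (simp add: apply_mat_def)
qed

lemma low_degree_sqnorm:
  assumes "finite X" "\<And>x. low_degree d (\<lambda>S. \<psi> S x)"
  shows "low_degree (d + d) (\<lambda>S. sqnorm X (\<psi> S))"
proof -
  have "sqnorm X (\<psi> S) = Re (\<Sum>x\<in>X. \<psi> S x * cnj (\<psi> S x))" for S
    by (simp flip: of_real_sqnorm)
  moreover have "low_degree (d + d) (\<lambda>S. Re (\<Sum>x\<in>X. \<psi> S x * cnj (\<psi> S x)))"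
    by (intro low_degree_additive[of Re] low_degree_sum low_degree_mult
        low_degree_additive[of cnj] assms) simp_all
  ultimately show ?thesis by simp
qed

lemma hard_instance_query_lower_bound:
  assumes "0 < n" "0 < W" "1 < (2::nat) ^ kc" "2 < (2::nat) ^ kr"
    and unitary: "\<forall>t\<le>T. unitary_on (qbasis_set n kc kr W) (U t)"
    and success: "\<And>S. S \<subseteq> {..<n} \<Longrightarrow> 2/3 \<le> succ_prob (qbasis_set n kc kr W) U sched out T
      (hard_instance n S) (hard_instance n S) (n + card S)"
  shows "n \<le> T + T"
proof -
  let ?Bs = "qbasis_set n kc kr W"
  let ?\<psi> = "\<lambda>S. qrun ?Bs U sched (hard_instance n S) (hard_instance n S) T"
  define P where "P S = sqnorm {x\<in>?Bs. even (out x)} (?\<psi> S)" for S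
  have fits: "fst (hard_instance n S ! i) < 2 ^ kc \<and> snd (hard_instance n S ! i) < 2 ^ kr"
    if "i < n" for i S
    using hard_instance_fits[OF assms(3,4) nth_mem] that by simp
  have "low_degree T (\<lambda>S. ?\<psi> S x)" for x
    by (rule low_degree_qrun) (erule depends_only_on_nth_hard_instance)+
  then have "low_degree (T + T) P"
    unfolding P_def by (rule low_degree_sqnorm[rotated]) simp
  then have "low_degree (0 + (T + T)) (\<lambda>S. (-1) ^ n * (P S - 1/2))"
    by (rule low_degree_mult[OF low_degree_const low_degree_diff[OF _ low_degree_const]])
  moreover have "0 < (-1) ^ card S * ((-1) ^ n * (P S - 1/2))" if "S \<subseteq> {..<n}" for S
  proof -
    have "1/6 \<le> (-1) ^ (n + card S) * (P S - 1/2)"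
      unfolding P_def
    proof (rule parity_bias_of_success)
      show "sqnorm ?Bs (?\<psi> S) = 1"
        by (rule sqnorm_qrun[OF assms(1,2) unitary fits fits]) simp_all
      show "2/3 \<le> sqnorm {x\<in>?Bs. out x = n + card S} (?\<psi> S)"
        using success[OF that] by (simp add: succ_prob_def sqnorm_def)
    qed simp
    moreover have "(-1) ^ (n + card S) * (P S - 1/2) = (-1) ^ card S * ((-1) ^ n * (P S - 1/2))"
      by (simp add: power_add mult_ac)
    ultimately show ?thesis by linarith
  qed
  ultimately have "n \<le> 0 + (T + T)"
    by (rule degree_ge_if_sign_of_parity)
  then show ?thesis by simp
qed

theorem lemma7:
  shows "\<exists>c::real>0. \<exists>n0::nat. \<forall>n\<ge>n0. \<forall>kc kr W T (U :: nat \<Rightarrow> qmat) sched (out :: qbasis \<Rightarrow> nat).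
     n < 2^kc \<longrightarrow> n < 2^kr \<longrightarrow> 0 < W \<longrightarrow>
     (\<forall>t\<le>T. unitary_on (qbasis_set n kc kr W) (U t)) \<longrightarrow>
     (\<forall>A B. length A = n \<longrightarrow> length B = n \<longrightarrow> valid_rle A \<longrightarrow> valid_rle B \<longrightarrow>
        (\<forall>p\<in>set A \<union> set B. fst p < 2^kc \<and> snd p < 2^kr) \<longrightarrow>
        succ_prob (qbasis_set n kc kr W) U sched out T A B
          (lcs_len (decode A) (decode B)) \<ge> 2/3) \<longrightarrow>
     real T \<ge> c * real n"
proof (intro exI[of _ "1/2"] conjI exI[of _ 2] allI impI)
  fix n kc kr W T and U :: "nat \<Rightarrow> qmat" and sched and out :: "qbasis \<Rightarrow> nat"
  assume "2 \<le> n" "n < 2^kc" "n < 2^kr" "0 < W"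
    and unitary: "\<forall>t\<le>T. unitary_on (qbasis_set n kc kr W) (U t)"
    and success: "\<forall>A B. length A = n \<longrightarrow> length B = n \<longrightarrow> valid_rle A \<longrightarrow> valid_rle B \<longrightarrow>
        (\<forall>p\<in>set A \<union> set B. fst p < 2^kc \<and> snd p < 2^kr) \<longrightarrow>
        succ_prob (qbasis_set n kc kr W) U sched out T A B
          (lcs_len (decode A) (decode B)) \<ge> 2/3"
  have registers: "1 < (2::nat) ^ kc" "2 < (2::nat) ^ kr"
    using \<open>2 \<le> n\<close> \<open>n < 2^kc\<close> \<open>n < 2^kr\<close> by linarith+
  have "n \<le> T + T"
  proof (rule hard_instance_query_lower_bound[OF _ \<open>0 < W\<close> registers unitary])
    fix S assume "S \<subseteq> {..<n}"
    then show "2/3 \<le> succ_prob (qbasis_set n kc kr W) U sched out T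
        (hard_instance n S) (hard_instance n S) (n + card S)"
      using success[rule_format, of "hard_instance n S" "hard_instance n S"]
        hard_instance_fits[OF registers]
      by (simp add: valid_rle_hard_instance lcs_len_self length_decode_hard_instance Int_absorb2)
  qed (use \<open>2 \<le> n\<close> in simp)
  then show "real T \<ge> 1/2 * real n" by simp
qed simp

end
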